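(* Let $H$ be a real Hilbert space with inner product $\langle\cdot,\cdot\rangle$, let $\mathcal{I}$ be a finite index set, and let $J, g_i : H\to\mathbb{R}$ ($i\in\mathcal{I}$) be $\mathcal{C}^1$ functions. Consider the problem of minimizing $J(u)$ subject to $g_i(u)\le 0$ for all $i\in\mathcal{I}$, with feasible set $\Omega=\{u\in H: g_i(u)\le 0\ \forall i\in\mathcal{I}\}$. Assume that for every $u\in\Omega$ with $I_A(u)\neq\emptyset$ the vectors $\{g_i'(u): i\in I_A(u)\}$ are linearly independent. Then a point $u\in\Omega$ is a KKT point of this problem if and only if $d_A(u)=0$.
   Context: $J'(u)$ and $g_i'(u)$ denote gradients (elements of $H$). For $u\in\Omega$, the active index set is $I_A(u)=\{i\in\mathcal{I}: g_i(u)=0\}$, and $C_A(u)=\{\sum_{i\in I_A(u)} a_i g_i'(u): a_i\ge 0\}$ is the polyhedral cone generated by the active gradients ($C_A(u)=\{0\}$ if $I_A(u)=\emptyset$). For a closed convex set $C\subset H$, $\mathbb{P}_C(v)$ denotes the metric projection of $v$ onto $C$. The correctable steepest descent direction is $d_A(u)=-J'(u)-\mathbb{P}_{C_A(u)}(-J'(u))$. A point $u\in\Omega$ is a KKT point if there exist $\mu_i\ge 0$ ($i\in\mathcal{I}$) with $-J'(u)=\sum_{i\in\mathcal{I}}\mu_i g_i'(u)$ and $\mu_i g_i(u)=0$ for all $i\in\mathcal{I}$. *)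

theory Defs
  imports "HOL-Analysis.Analysis"
begin

text \<open>A real Hilbert space is modelled by a type of class real_inner and complete_space.\<close>

definition C1_grad :: "('a::real_inner \<Rightarrow> real) \<Rightarrow> ('a \<Rightarrow> 'a) \<Rightarrow> bool" where
  "C1_grad f f' \<longleftrightarrow> (\<forall>u. (f has_derivative (\<lambda>h. f' u \<bullet> h)) (at u)) \<and> continuous_on UNIV f'"

definition proj :: "'a::real_inner set \<Rightarrow> 'a \<Rightarrow> 'a" where
  "proj C v = (THE p. p \<in> C \<and> (\<forall>c\<in>C. norm (v - p) \<le> norm (v - c)))"

definition feasible :: "'i set \<Rightarrow> ('i \<Rightarrow> 'a \<Rightarrow> real) \<Rightarrow> 'a set" where
  "feasible I g = {u. \<forall>i\<in>I. g i u \<le> 0}"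

definition active :: "'i set \<Rightarrow> ('i \<Rightarrow> 'a \<Rightarrow> real) \<Rightarrow> 'a \<Rightarrow> 'i set" where
  "active I g u = {i\<in>I. g i u = 0}"

definition active_cone :: "'i set \<Rightarrow> ('i \<Rightarrow> 'a \<Rightarrow> real) \<Rightarrow> ('i \<Rightarrow> 'a \<Rightarrow> 'a::real_vector) \<Rightarrow> 'a \<Rightarrow> 'a set" where
  "active_cone I g g' u =
     {(\<Sum>i\<in>active I g u. a i *\<^sub>R g' i u) | a. \<forall>i\<in>active I g u. a i \<ge> 0}"

definition dA :: "'i set \<Rightarrow> ('a \<Rightarrow> 'a) \<Rightarrow> ('i \<Rightarrow> 'a \<Rightarrow> real) \<Rightarrow> ('i \<Rightarrow> 'a \<Rightarrow> 'a::real_inner) \<Rightarrow> 'a \<Rightarrow> 'a" where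
  "dA I J' g g' u = - J' u - proj (active_cone I g g' u) (- J' u)"

definition KKT_point :: "'i set \<Rightarrow> ('a \<Rightarrow> 'a) \<Rightarrow> ('i \<Rightarrow> 'a \<Rightarrow> real) \<Rightarrow> ('i \<Rightarrow> 'a \<Rightarrow> 'a::real_vector) \<Rightarrow> 'a \<Rightarrow> bool" where
  "KKT_point I J' g g' u \<longleftrightarrow> u \<in> feasible I g \<and>
     (\<exists>\<mu>. (\<forall>i\<in>I. \<mu> i \<ge> 0) \<and> - J' u = (\<Sum>i\<in>I. \<mu> i *\<^sub>R g' i u) \<and> (\<forall>i\<in>I. \<mu> i * g i u = 0))"

end

theory Submission imports Defs begin

text \<open>A KKT multiplier must vanish on the inactive constraints, so u is a KKT point exactly when
  \<open>-J'(u)\<close> lies in the cone \<open>C_A(u)\<close>. Since \<open>d_A(u) = 0\<close> says that \<open>-J'(u)\<close> is its own projection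
  onto \<open>C_A(u)\<close>, it remains to see that this projection is well defined, i.e. that every point
  has a unique nearest point in the cone. Uniqueness is the parallelogram law for the convex cone.
  Existence uses the linear independence of the active gradients: it gives
  \<open>c \<Sum> |a\<^sub>i| \<le> \<parallel>\<Sum> a\<^sub>i g\<^sub>i'(u)\<parallel>\<close> for some \<open>c > 0\<close>, so any candidate nearer to v than 0 has
  bounded coefficients, and the search reduces to the continuous image of a compact box.\<close>

definition generated_cone :: "'i set \<Rightarrow> ('i \<Rightarrow> 'a::real_vector) \<Rightarrow> 'a set" where
  "generated_cone A w = {(\<Sum>i\<in>A. a i *\<^sub>R w i) | a. \<forall>i\<in>A. a i \<ge> 0}"

lemma active_cone_eq_generated_cone:
  "active_cone I g g' u = generated_cone (active I g u) (\<lambda>i. g' i u)"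
  by (simp add: active_cone_def generated_cone_def)

lemma convex_generated_cone: "convex (generated_cone A w)"
proof (rule convexI)
  fix x y and s t :: real
  assume "x \<in> generated_cone A w" "y \<in> generated_cone A w" "0 \<le> s" "0 \<le> t"
  then obtain a b where "x = (\<Sum>i\<in>A. a i *\<^sub>R w i)" "\<forall>i\<in>A. a i \<ge> 0"
      and "y = (\<Sum>i\<in>A. b i *\<^sub>R w i)" "\<forall>i\<in>A. b i \<ge> 0"
    by (auto simp: generated_cone_def)
  then have "s *\<^sub>R x + t *\<^sub>R y = (\<Sum>i\<in>A. (s * a i + t * b i) *\<^sub>R w i)"
      and "\<forall>i\<in>A. s * a i + t * b i \<ge> 0"
    using \<open>0 \<le> s\<close> \<open>0 \<le> t\<close>
    by (simp_all add: scaleR_sum_right sum.distrib[symmetric] scaleR_add_left)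
  then show "s *\<^sub>R x + t *\<^sub>R y \<in> generated_cone A w"
    unfolding generated_cone_def by (intro CollectI exI[of _ "\<lambda>i. s * a i + t * b i"]) simp
qed

lemma compact_Pi_UNIV:
  fixes K :: "'i \<Rightarrow> real set"
  assumes "\<And>i. compact (K i)"
  shows "compact (Pi UNIV K)"
proof -
  have "compactin (product_topology (\<lambda>_. euclidean) UNIV) (PiE UNIV K)"
    using assms by (simp add: compactin_PiE)
  then show ?thesis by (simp add: euclidean_product_topology PiE_UNIV_domain)
qed

lemma independent_image_sum_eq_0:
  assumes "finite A" "inj_on w A" "independent (w ` A)"
    and "(\<Sum>i\<in>A. a i *\<^sub>R w i) = 0" "i \<in> A"
  shows "a i = 0"
proof -
  define b where "b = (\<lambda>x. a (the_inv_into A w x))"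
  have "(\<Sum>x\<in>w ` A. b x *\<^sub>R x) = (\<Sum>i\<in>A. a i *\<^sub>R w i)"
    using \<open>inj_on w A\<close> by (simp add: sum.reindex b_def the_inv_into_f_f)
  then have "b (w i) = 0"
    using assms by (intro real_vector.independentD[of "w ` A" "w ` A" b]) auto
  then show ?thesis
    using assms by (simp add: b_def the_inv_into_f_f)
qed

text \<open>The constant is the minimum of \<open>\<parallel>\<Sum> a\<^sub>i w\<^sub>i\<parallel>\<close> over the compact set \<open>\<Sum> |a\<^sub>i| = 1\<close>;
  the general case follows by homogeneity.\<close>

lemma independent_coeff_norm_bound:
  fixes w :: "'i \<Rightarrow> 'a::real_normed_vector"
  assumes fin: "finite A" and inj: "inj_on w A" and ind: "independent (w ` A)"
  obtains c where "c > 0" "\<And>a. c * (\<Sum>i\<in>A. \<bar>a i\<bar>) \<le> norm (\<Sum>i\<in>A. a i *\<^sub>R w i)"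
proof (cases "A = {}")
  case True
  then show ?thesis by (intro that[of 1]) auto
next
  case False
  define N where "N = (\<lambda>a. norm (\<Sum>i\<in>A. a i *\<^sub>R w i))"
  define S :: "('i \<Rightarrow> real) set"
    where "S = Pi UNIV (\<lambda>i. if i \<in> A then {-1..1} else {0}) \<inter> {a. (\<Sum>i\<in>A. \<bar>a i\<bar>) = 1}"
  have "compact S"
    unfolding S_def
    by (intro compact_Int_closed compact_Pi_UNIV closed_Collect_eq continuous_intros
        continuous_on_product_coordinates) auto
  moreover obtain i0 where "i0 \<in> A" using False by auto
  then have "(\<lambda>i. if i = i0 then 1 else 0) \<in> S"
    using fin by (auto simp: S_def if_distrib cong: if_cong)
  then have "S \<noteq> {}" by auto
  moreover have "continuous_on S N"
    unfolding N_def
    by (intro continuous_intros continuous_on_subset[OF continuous_on_product_coordinates]) auto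
  ultimately obtain a0 where a0: "a0 \<in> S" and min: "\<And>b. b \<in> S \<Longrightarrow> N a0 \<le> N b"
    using continuous_attains_inf[of S N] by blast
  have "N a0 > 0"
  proof (rule ccontr)
    assume "\<not> N a0 > 0"
    then have "a0 i = 0" if "i \<in> A" for i
      using independent_image_sum_eq_0[OF fin inj ind _ that] by (simp add: N_def)
    with a0 show False by (simp add: S_def)
  qed
  moreover have "N a0 * (\<Sum>i\<in>A. \<bar>a i\<bar>) \<le> N a" for a
  proof (cases "(\<Sum>i\<in>A. \<bar>a i\<bar>) = 0")
    case False
    define s where "s = (\<Sum>i\<in>A. \<bar>a i\<bar>)"
    have "s > 0" using False by (simp add: s_def sum_nonneg order_le_neq_trans)
    define b where "b = (\<lambda>i. if i \<in> A then a i / s else 0)"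
    have sum_b: "(\<Sum>i\<in>A. \<bar>b i\<bar>) = 1"
      using \<open>s > 0\<close> by (simp add: b_def s_def sum_divide_distrib[symmetric])
    have "\<bar>b i\<bar> \<le> 1" if "i \<in> A" for i
      using member_le_sum[of i A "\<lambda>i. \<bar>b i\<bar>"] that fin sum_b by auto
    then have "b \<in> S" using sum_b by (auto simp: S_def abs_le_iff) (simp add: b_def)
    moreover have "(\<Sum>i\<in>A. b i *\<^sub>R w i) = (1 / s) *\<^sub>R (\<Sum>i\<in>A. a i *\<^sub>R w i)"
      by (simp add: b_def scaleR_sum_right)
    then have "N b = N a / s" using \<open>s > 0\<close> by (simp add: N_def)
    ultimately have "N a0 \<le> N a / s" using min by metis
    then show ?thesis using \<open>s > 0\<close> by (simp add: s_def[symmetric] field_simps)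
  qed (simp add: N_def)
  ultimately show ?thesis using that unfolding N_def by blast
qed

lemma generated_cone_nearest_point_exists:
  fixes w :: "'i \<Rightarrow> 'a::real_normed_vector"
  assumes fin: "finite A" and inj: "inj_on w A" and ind: "independent (w ` A)"
  shows "\<exists>p\<in>generated_cone A w. \<forall>q\<in>generated_cone A w. norm (v - p) \<le> norm (v - q)"
proof -
  obtain c where "c > 0" and bound: "\<And>a. c * (\<Sum>i\<in>A. \<bar>a i\<bar>) \<le> norm (\<Sum>i\<in>A. a i *\<^sub>R w i)"
    using independent_coeff_norm_bound[OF fin inj ind] by blast
  define R where "R = 2 * norm v / c"
  define box where "box = Pi UNIV (\<lambda>i. if i \<in> A then {0..R} else {0})"
  define L where "L = (\<lambda>a. \<Sum>i\<in>A. a i *\<^sub>R w i)"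
  have "compact (L ` box)"
    unfolding L_def box_def
    by (intro compact_continuous_image compact_Pi_UNIV continuous_intros
        continuous_on_subset[OF continuous_on_product_coordinates]) auto
  moreover have "(\<lambda>_. 0) \<in> box" using \<open>c > 0\<close> by (auto simp: box_def R_def)
  then have "0 \<in> L ` box" by (force simp: L_def)
  moreover have "continuous_on (L ` box) (\<lambda>x. norm (v - x))" by (intro continuous_intros)
  ultimately obtain p where "p \<in> L ` box" and min: "\<And>x. x \<in> L ` box \<Longrightarrow> norm (v - p) \<le> norm (v - x)"
    using continuous_attains_inf[of "L ` box" "\<lambda>x. norm (v - x)"] by blast
  have box_cone: "L ` box \<subseteq> generated_cone A w"
    by (auto simp: box_def generated_cone_def L_def Pi_def split: if_splits)
  have "norm (v - p) \<le> norm (v - q)" if "q \<in> generated_cone A w" for q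
  proof (rule ccontr)
    assume closer: "\<not> norm (v - p) \<le> norm (v - q)"
    obtain a where q: "q = L a" and a_nonneg: "\<forall>i\<in>A. a i \<ge> 0" and a_supp: "\<forall>i. i \<notin> A \<longrightarrow> a i = 0"
    proof -
      from \<open>q \<in> generated_cone A w\<close> obtain a where "q = L a" "\<forall>i\<in>A. a i \<ge> 0"
        by (auto simp: generated_cone_def L_def)
      then show ?thesis
        by (intro that[of "\<lambda>i. if i \<in> A then a i else 0"]) (auto simp: L_def)
    qed
    have "norm (v - q) < norm v" using closer min[OF \<open>0 \<in> L ` box\<close>] by simp
    then have "norm q < 2 * norm v" using norm_triangle_ineq4[of v "v - q"] by simp
    then have sum_a: "(\<Sum>i\<in>A. \<bar>a i\<bar>) \<le> R"
      using bound[of a] q \<open>c > 0\<close> by (simp add: L_def R_def field_simps)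
    have "a i \<le> R" if "i \<in> A" for i
      using member_le_sum[of i A "\<lambda>i. \<bar>a i\<bar>"] that fin sum_a by auto
    then have "q \<in> L ` box" using q a_nonneg a_supp by (auto simp: box_def)
    then show False using min closer by blast
  qed
  then show ?thesis using \<open>p \<in> L ` box\<close> box_cone by blast
qed

lemma nearest_point_convex_unique:
  fixes v p q :: "'a::real_inner"
  assumes "convex C" "p \<in> C" "q \<in> C"
    and "\<forall>c\<in>C. norm (v - p) \<le> norm (v - c)" "\<forall>c\<in>C. norm (v - q) \<le> norm (v - c)"
  shows "p = q"
proof -
  define m where "m = (p + q) /\<^sub>R 2"
  have "m \<in> C"
    using convexD[OF assms(1-3), of "1/2" "1/2"] by (simp add: m_def scaleR_add_right)
  then have le: "norm (v - p) \<le> norm (v - m)" using assms by auto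
  have eq: "norm (v - p) = norm (v - q)" using assms by (meson order_antisym)
  have parallelogram:
    "(norm (v - m))\<^sup>2 = ((norm (v - p))\<^sup>2 + (norm (v - q))\<^sup>2) / 2 - (norm (p - q))\<^sup>2 / 4"
    unfolding m_def power2_norm_eq_inner
    by (simp add: inner_diff_left inner_diff_right inner_add_left inner_add_right inner_commute
        field_simps)
  have "(norm (v - p))\<^sup>2 \<le> (norm (v - m))\<^sup>2" using le by (simp add: power_mono)
  then have "(norm (p - q))\<^sup>2 \<le> 0" using parallelogram eq by simp
  then show ?thesis by simp
qed

lemma proj_eq_self_iff:
  fixes v :: "'a::real_inner"
  assumes "convex C" and "\<exists>p\<in>C. \<forall>c\<in>C. norm (v - p) \<le> norm (v - c)"
  shows "proj C v = v \<longleftrightarrow> v \<in> C"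
proof -
  have "\<exists>!p. p \<in> C \<and> (\<forall>c\<in>C. norm (v - p) \<le> norm (v - c))"
    using assms nearest_point_convex_unique[OF \<open>convex C\<close>] by blast
  then have proj: "proj C v \<in> C \<and> (\<forall>c\<in>C. norm (v - proj C v) \<le> norm (v - c))"
    unfolding proj_def by (rule theI')
  show ?thesis
  proof
    assume "v \<in> C"
    then have "norm (v - proj C v) \<le> 0" using proj by fastforce
    then show "proj C v = v" by simp
  qed (use proj in metis)
qed

lemma KKT_point_iff_active_cone:
  assumes "finite I" and "u \<in> feasible I g"
  shows "KKT_point I J' g g' u \<longleftrightarrow> - J' u \<in> active_cone I g g' u"
proof -
  let ?A = "active I g u"
  have A_sub: "?A \<subseteq> I" by (auto simp: active_def)
  have inactive: "g i u < 0" if "i \<in> I - ?A" for i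
    using assms(2) that by (force simp: feasible_def active_def)
  have sum_active: "(\<Sum>i\<in>I. \<mu> i *\<^sub>R g' i u) = (\<Sum>i\<in>?A. \<mu> i *\<^sub>R g' i u)"
    if "\<forall>i\<in>I - ?A. \<mu> i = 0" for \<mu>
    using that by (intro sum.mono_neutral_right[OF assms(1) A_sub]) auto
  show ?thesis
  proof
    assume "KKT_point I J' g g' u"
    then obtain \<mu> where "\<forall>i\<in>I. \<mu> i \<ge> 0" "- J' u = (\<Sum>i\<in>I. \<mu> i *\<^sub>R g' i u)"
        and "\<forall>i\<in>I. \<mu> i * g i u = 0"
      by (auto simp: KKT_point_def)
    moreover from this(3) have "\<forall>i\<in>I - ?A. \<mu> i = 0" using inactive by fastforce
    ultimately have "- J' u = (\<Sum>i\<in>?A. \<mu> i *\<^sub>R g' i u)" "\<forall>i\<in>?A. \<mu> i \<ge> 0"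
      using sum_active A_sub by auto
    then show "- J' u \<in> active_cone I g g' u"
      unfolding active_cone_def by (intro CollectI exI[of _ \<mu>]) simp
  next
    assume "- J' u \<in> active_cone I g g' u"
    then obtain a where a: "- J' u = (\<Sum>i\<in>?A. a i *\<^sub>R g' i u)" "\<forall>i\<in>?A. a i \<ge> 0"
      by (auto simp: active_cone_def)
    define \<mu> where "\<mu> = (\<lambda>i. if i \<in> ?A then a i else 0)"
    have "(\<Sum>i\<in>I. \<mu> i *\<^sub>R g' i u) = (\<Sum>i\<in>?A. \<mu> i *\<^sub>R g' i u)"
      by (rule sum_active) (simp add: \<mu>_def)
    also have "\<dots> = - J' u"
      unfolding a(1) by (intro sum.cong) (simp_all add: \<mu>_def)
    finally have "- J' u = (\<Sum>i\<in>I. \<mu> i *\<^sub>R g' i u)" ..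
    moreover have "\<forall>i\<in>I. \<mu> i \<ge> 0" "\<forall>i\<in>I. \<mu> i * g i u = 0"
      using a(2) by (auto simp: \<mu>_def active_def)
    ultimately show "KKT_point I J' g g' u"
      using assms(2) unfolding KKT_point_def by metis
  qed
qed

theorem lemma2:
  fixes J :: "'a::{real_inner, complete_space} \<Rightarrow> real"
    and J' :: "'a \<Rightarrow> 'a"
    and I :: "'i set"
    and g :: "'i \<Rightarrow> 'a \<Rightarrow> real"
    and g' :: "'i \<Rightarrow> 'a \<Rightarrow> 'a"
  assumes "finite I"
    and "C1_grad J J'"
    and "\<forall>i\<in>I. C1_grad (g i) (g' i)"
    and "\<forall>v\<in>feasible I g. active I g v \<noteq> {} \<longrightarrow>
           inj_on (\<lambda>i. g' i v) (active I g v) \<and> independent ((\<lambda>i. g' i v) ` active I g v)"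
    and "u \<in> feasible I g"
  shows "KKT_point I J' g g' u \<longleftrightarrow> dA I J' g g' u = 0"
proof -
  let ?A = "active I g u" and ?C = "active_cone I g g' u"
  have "finite ?A" using assms(1) by (simp add: active_def)
  moreover have "inj_on (\<lambda>i. g' i u) ?A \<and> independent ((\<lambda>i. g' i u) ` ?A)"
    using assms(4,5) by (cases "?A = {}") (auto simp: real_vector.independent_empty)
  ultimately have "\<exists>p\<in>?C. \<forall>c\<in>?C. norm (- J' u - p) \<le> norm (- J' u - c)"
    unfolding active_cone_eq_generated_cone by (blast intro: generated_cone_nearest_point_exists)
  then have "proj ?C (- J' u) = - J' u \<longleftrightarrow> - J' u \<in> ?C"
    by (intro proj_eq_self_iff) (simp_all add: active_cone_eq_generated_cone convex_generated_cone)
  then show ?thesis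
    using KKT_point_iff_active_cone[OF assms(1,5)] by (auto simp: dA_def)
qed

end
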